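(* Every prime number that is antipalindromic in base $3$ can be written as $6k+1$ for some $k\in\mathbb N$.
   Context: For an integer $b\ge 2$, every natural number $m$ has a unique base-$b$ expansion $m=a_nb^n+\dots+a_1b+a_0$ with $a_0,\dots,a_n\in\{0,1,\dots,b-1\}$ and $a_n\neq 0$. The number $m$ is antipalindromic in base $b$ if $a_j=b-1-a_{n-j}$ for all $j\in\{0,1,\dots,n\}$. $\mathbb N$ denotes the positive integers. *)

theory Defs
  imports Main "HOL-Computational_Algebra.Primes"
begin

definition digit :: "nat \<Rightarrow> nat \<Rightarrow> nat \<Rightarrow> nat" where
  "digit b m j = (m div b ^ j) mod b"

text \<open>m is antipalindromic in base b: m > 0 has leading index n
  (b^n <= m < b^(n+1), so a_n is nonzero) and a_j = b - 1 - a_(n-j) for all j <= n.\<close>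
definition antipalindromic :: "nat \<Rightarrow> nat \<Rightarrow> bool" where
  "antipalindromic b m \<longleftrightarrow>
     (\<exists>n. b ^ n \<le> m \<and> m < b ^ (n + 1) \<and>
          (\<forall>j\<le>n. digit b m j = b - 1 - digit b m (n - j)))"

end

theory Submission
  imports Defs
begin

text \<open>The last base-b digit of an antipalindromic number is b - 1 minus its nonzero leading
  digit, so it is never b - 1. In base 3 this leaves residues 0 and 1; a prime with residue 0
  would be 3 = (10) in base 3, which is not antipalindromic. Hence an antipalindromic prime is
  1 mod 3, and being odd, 1 mod 6.\<close>

lemma antipalindromic_mod_less:
  assumes "antipalindromic b m"
  shows "m mod b < b - 1"
proof -
  obtain n where lower: "b ^ n \<le> m" and upper: "m < b ^ (n + 1)"
    and anti: "\<forall>j\<le>n. digit b m j = b - 1 - digit b m (n - j)"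
    using assms unfolding antipalindromic_def by blast
  have "0 < b"
    using upper by (cases "b = 0") auto
  then have lead_pos: "1 \<le> m div b ^ n"
    using div_le_mono[OF lower, of "b ^ n"] by simp
  have lead_less: "m div b ^ n < b"
    using upper \<open>0 < b\<close> by (simp add: div_less_iff_less_mult mult.commute)
  have "digit b m n = m div b ^ n"
    using lead_less by (simp add: digit_def)
  then have "m mod b = b - 1 - m div b ^ n"
    using anti[rule_format, of 0] by (simp add: digit_def)
  then show ?thesis
    using lead_pos lead_less by simp
qed

lemma not_antipalindromic_base:
  assumes "3 \<le> b"
  shows "\<not> antipalindromic b b"
proof
  assume "antipalindromic b b"
  then obtain n where lower: "b ^ n \<le> b" and upper: "b < b ^ (n + 1)"
    and anti: "\<forall>j\<le>n. digit b b j = b - 1 - digit b b (n - j)"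
    unfolding antipalindromic_def by blast
  have "n = 1"
  proof (rule ccontr)
    assume "n \<noteq> 1"
    then consider "n = 0" | "2 \<le> n" by linarith
    then show False
    proof cases
      case 1
      then show False using upper by simp
    next
      case 2
      have "b < b ^ 2" using assms by (simp add: power2_eq_square)
      also have "\<dots> \<le> b ^ n" using 2 assms by (simp add: power_increasing)
      finally show False using lower by simp
    qed
  qed
  then have "digit b b 0 = b - 1 - digit b b 1"
    using anti[rule_format, of 0] by simp
  then show False
    using assms by (simp add: digit_def)
qed

theorem mainTheorem9:
  fixes p :: nat
  assumes "prime p" and "antipalindromic 3 p"
  shows "\<exists>k::nat. k \<ge> 1 \<and> p = 6 * k + 1"
proof -
  have "p \<noteq> 3"
    using assms(2) not_antipalindromic_base[of 3] by auto
  then have "\<not> 3 dvd p"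
    using assms(1) by (auto simp: prime_nat_iff)
  moreover have "p mod 3 < 2"
    using antipalindromic_mod_less[OF assms(2)] by simp
  ultimately have mod3: "p mod 3 = 1"
    by presburger
  have "p > 1"
    using assms(1) by (rule prime_gt_1_nat)
  moreover have "p \<noteq> 2"
    using mod3 by auto
  ultimately have "odd p"
    using assms(1) prime_odd_nat by simp
  then have "p mod 6 = 1"
    using mod3 by presburger
  with \<open>p > 1\<close> have "p = 6 * (p div 6) + 1" "p div 6 \<ge> 1"
    by presburger+
  then show ?thesis by blast
qed

end
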